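(* Let $a,b\geq 1$ be integers. Let $x\in\Lambda^{a+b}$ satisfy $x_1+\cdots+x_{a+b}>b\,x_{a+b}$ and $x_{a+b}\geq 2x_a$. Then $y=T_{a,b}(x)$ satisfies $y_1+\cdots+y_{a+b}>b\,y_{a+b}$.
   Context: For $n\geq 1$ let $\Lambda^n=\{x\in\mathbb{R}^n : 0\leq x_1\leq\cdots\leq x_n\}$. For integers $a,b\geq 1$ the map $T_{a,b}:\Lambda^{a+b}\to\Lambda^{a+b}$ sends $x$ to the vector obtained by arranging $x_1,\ldots,x_a,\,x_{a+1}-x_a,\ldots,x_{a+b}-x_a$ in nondecreasing order. *)

theory Defs
  imports Main "HOL.Real"
begin

text \<open>Vectors in R^n are real lists of length n; entry x_i is x ! (i-1).\<close>

definition Lambda :: "nat \<Rightarrow> real list set" where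
  "Lambda n = {x. length x = n \<and> (\<forall>i<n. 0 \<le> x ! i) \<and> sorted x}"

definition T :: "nat \<Rightarrow> nat \<Rightarrow> real list \<Rightarrow> real list" where
  "T a b x = sort (take a x @ map (\<lambda>t. t - x ! (a - 1)) (take b (drop a x)))"

end

theory Submission
  imports Defs "HOL-Library.Multiset"
begin

text \<open>Passing from \<open>x\<close> to \<open>T a b x\<close> lowers the sum by exactly \<open>b x\<^sub>a\<close>. On the other hand
  every entry of \<open>T a b x\<close> is at most \<open>x\<^sub>a\<^sub>+\<^sub>b - x\<^sub>a\<close>: the shifted entries trivially, and the
  unshifted ones because \<open>x\<^sub>a \<le> x\<^sub>a\<^sub>+\<^sub>b - x\<^sub>a\<close> is the hypothesis \<open>x\<^sub>a\<^sub>+\<^sub>b \<ge> 2x\<^sub>a\<close>. So the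
  largest entry drops by at least \<open>x\<^sub>a\<close> and \<open>b\<close> times it by at least \<open>b x\<^sub>a\<close>, matching the
  loss in the sum.\<close>

lemma length_T: "length x = a + b \<Longrightarrow> length (T a b x) = a + b"
  by (simp add: T_def)

lemma sum_list_sort:
  "sum_list (sort xs) = sum_list (xs :: 'a :: {linorder, comm_monoid_add} list)"
  by (metis mset_sort sum_mset_sum_list)

lemma sum_list_T:
  assumes "length x = a + b"
  shows "sum_list (T a b x) = sum_list x - real b * x ! (a - 1)"
proof -
  have "sum_list (T a b x)
      = sum_list (take a x) + (sum_list (drop a x) - real b * x ! (a - 1))"
    using assms by (simp add: T_def sum_list_sort sum_list_subtractf sum_list_triv)
  also have "\<dots> = sum_list x - real b * x ! (a - 1)"
    by (metis add_diff_eq append_take_drop_id sum_list_append)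
  finally show ?thesis .
qed

lemma T_entry_le:
  assumes "sorted x" and "length x = a + b"
    and "2 * x ! (a - 1) \<le> x ! (a + b - 1)"
    and "t \<in> set (T a b x)"
  shows "t \<le> x ! (a + b - 1) - x ! (a - 1)"
proof -
  have "set (T a b x) = set (take a x) \<union> (\<lambda>s. s - x ! (a - 1)) ` set (take b (drop a x))"
    by (simp add: T_def)
  with assms(4) consider "t \<in> set (take a x)"
    | s where "s \<in> set (take b (drop a x))" "t = s - x ! (a - 1)"
    by auto
  then show ?thesis
  proof cases
    case 1
    then obtain i where i: "i < a" "t = x ! i"
      using assms(2) by (auto simp: in_set_conv_nth)
    have "x ! i \<le> x ! (a - 1)"
      using i assms(1,2) by (intro sorted_nth_mono) auto
    with i assms(3) show ?thesis by linarith
  next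
    case 2
    then obtain i where i: "i < b" "s = x ! (a + i)"
      using assms(2) by (auto simp: in_set_conv_nth)
    have "x ! (a + i) \<le> x ! (a + b - 1)"
      using i assms(1,2) by (intro sorted_nth_mono) auto
    with i 2 show ?thesis by linarith
  qed
qed

theorem lemma5p1:
  fixes a b :: nat and x :: "real list"
  assumes "a \<ge> 1" and "b \<ge> 1"
    and "x \<in> Lambda (a + b)"
    and "sum_list x > real b * x ! (a + b - 1)"
    and "x ! (a + b - 1) \<ge> 2 * x ! (a - 1)"
  shows "sum_list (T a b x) > real b * (T a b x) ! (a + b - 1)"
proof -
  have len: "length x = a + b" and srt: "sorted x"
    using assms(3) by (auto simp: Lambda_def)
  have "T a b x ! (a + b - 1) \<in> set (T a b x)"
    using assms(1) len by (simp add: length_T)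
  then have "T a b x ! (a + b - 1) \<le> x ! (a + b - 1) - x ! (a - 1)"
    using T_entry_le[OF srt len assms(5)] by blast
  then have "real b * T a b x ! (a + b - 1) \<le> real b * (x ! (a + b - 1) - x ! (a - 1))"
    by (intro mult_left_mono) auto
  with assms(4) show ?thesis
    by (simp add: sum_list_T[OF len] algebra_simps)
qed

end
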